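(* Let $f\in\mathcal{P}_n$ be continuous and compactly supported. For $\alpha>0$ let $s_\alpha=\sinh^{-1}(1/\alpha)$. Then $$|I(f)|=\lim_{\alpha\to0}(2s_\alpha)^{-n}|I^\alpha(f)|.$$
   Context: $\mathcal{P}_n$ is the set of measurable $f:\mathbb{R}^n\to[0,\infty)$ with $\int f=1$ and $\|f\|_\infty<\infty$. Star-shaped sets are given by radial functions on $S^{n-1}$, with volume $|K|=\omega_n\int_{S^{n-1}}\rho(K,u)^nd\sigma(u)$ ($\sigma$ normalized surface measure, $\omega_n=|B_2^n|$). $I(f)$ is the star-shaped set with $\rho(I(f),u)=\int_{u^\perp}f(x)\,dx$ (Lebesgue measure on the hyperplane $u^\perp$). For $\alpha>0$, $I^\alpha(f)$ is the star-shaped set with $\rho(I^\alpha(f),u)=\int_{\mathbb{R}^n}\big(\langle x,u\rangle^2+\alpha^2\|u\|_2^2\big)^{-1/2}f(x)\,dx$. *)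

theory Defs
  imports "HOL-Analysis.Analysis"
begin

definition star_body :: "('a::euclidean_space \<Rightarrow> real) \<Rightarrow> 'a set" where
  "star_body \<rho> = {x. x = 0 \<or> norm x \<le> \<rho> (x /\<^sub>R norm x)}"

text \<open>Volume of the star-shaped set: its Lebesgue measure
  (equal to omega_n times the sigma-integral of rho to the n by polar coordinates).\<close>
definition star_volume :: "('a::euclidean_space \<Rightarrow> real) \<Rightarrow> real" where
  "star_volume \<rho> = measure lebesgue (star_body \<rho>)"

text \<open>Integral of f over the hyperplane orthogonal to the unit vector u, w.r.t.
  (n-1)-dimensional Lebesgue measure on it. By Fubini this equals the integral of
  f(x - <x,u>u) over the slab 0 <= <x,u> <= 1 of width one.\<close>
definition hyperplane_integral :: "('a::euclidean_space \<Rightarrow> real) \<Rightarrow> 'a \<Rightarrow> real" where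
  "hyperplane_integral f u =
     (LINT x : {x. 0 \<le> x \<bullet> u \<and> x \<bullet> u \<le> 1} | lebesgue. f (x - (x \<bullet> u) *\<^sub>R u))"

definition rho_I :: "('a::euclidean_space \<Rightarrow> real) \<Rightarrow> 'a \<Rightarrow> real" where
  "rho_I f u = hyperplane_integral f u"

definition rho_I_alpha :: "real \<Rightarrow> ('a::euclidean_space \<Rightarrow> real) \<Rightarrow> 'a \<Rightarrow> real" where
  "rho_I_alpha \<alpha> f u =
     (LINT x | lebesgue. f x / sqrt ((x \<bullet> u)\<^sup>2 + \<alpha>\<^sup>2 * (norm u)\<^sup>2))"

definition P_class :: "('a::euclidean_space \<Rightarrow> real) set" where
  "P_class = {f. f \<in> borel_measurable lebesgue \<and> (\<forall>x. 0 \<le> f x)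
                 \<and> integrable lebesgue f \<and> integral\<^sup>L lebesgue f = 1 \<and> bounded (range f)}"

end

theory Submission
  imports Defs
begin

(*
  Fix a unit vector u and let P x = x - (x . u) u be the projection onto the hyperplane orthogonal
  to u. The radial function of I^alpha(f) at u integrates f(x) against the kernel
  1 / sqrt ((x . u)^2 + alpha^2). Cut this kernel at |x . u| = delta: outside the cut it is at most
  1 / delta, and inside it uniform continuity allows replacing f(x) by f(P x), at the cost of
  epsilon on the cylinder over the support of f. A function g(P x) k(x . u) integrates to the
  hyperplane integral of g times the integral of k, and the truncated kernel has integral
  2 arsinh(delta / alpha), which differs from 2 s_alpha by at most -2 ln delta. Hence the radial
  functions of I^alpha(f), divided by 2 s_alpha, converge uniformly on the sphere to that of I(f).
  The volume of a star body depends continuously on its radial function under uniform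
  convergence, since a perturbed body lies between two dilates of the limit body up to a small
  ball; and dividing the radial function by 2 s_alpha multiplies the volume by (2 s_alpha)^(-n).
*)

section \<open>Star bodies and their volumes\<close>

lemma star_body_eq_image:
  "star_body \<rho> = insert 0 ((\<lambda>(r, u). r *\<^sub>R u) ` {(r, u). u \<in> sphere 0 1 \<and> 0 \<le> r \<and> r \<le> \<rho> u})"
proof (intro set_eqI iffI)
  fix x :: 'a
  assume x: "x \<in> star_body \<rho>"
  show "x \<in> insert 0 ((\<lambda>(r, u). r *\<^sub>R u) ` {(r, u). u \<in> sphere 0 1 \<and> 0 \<le> r \<and> r \<le> \<rho> u})"
  proof (cases "x = 0")
    case False
    then have "x = (\<lambda>(r, u). r *\<^sub>R u) (norm x, x /\<^sub>R norm x)" by simp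
    moreover have "(norm x, x /\<^sub>R norm x) \<in> {(r, u). u \<in> sphere 0 1 \<and> 0 \<le> r \<and> r \<le> \<rho> u}"
      using x False by (simp add: star_body_def)
    ultimately show ?thesis by (intro insertI2 image_eqI)
  qed simp
qed (auto simp: star_body_def; metis left_inverse scaleR_one)

lemma compact_star_body:
  assumes "continuous_on (sphere 0 1) \<rho>"
  shows "compact (star_body \<rho>)"
proof -
  obtain B where B: "\<And>u. u \<in> sphere 0 1 \<Longrightarrow> \<rho> u \<le> B"
    using compact_imp_bounded[OF compact_continuous_image[OF assms compact_sphere]]
    by (force simp: bounded_iff abs_le_iff)
  define K where "K = {p \<in> {0..B} \<times> sphere 0 1. fst p \<le> \<rho> (snd p)}"
  have "closed K"
    unfolding K_def by (intro continuous_on_closed_Collect_le closed_Times continuous_intros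
      continuous_on_compose2[OF assms]) auto
  then have "compact (({0..B} \<times> sphere 0 1) \<inter> K)"
    by (intro compact_Int_closed compact_Times) auto
  then have "compact K" by (simp add: K_def Int_absorb1)
  have K_eq: "{(r, u). u \<in> sphere 0 1 \<and> 0 \<le> r \<and> r \<le> \<rho> u} = K"
    unfolding K_def using B by (auto; smt (verit) mem_sphere_0 B)
  show ?thesis
    unfolding star_body_eq_image K_eq using \<open>compact K\<close>
    by (intro compact_insert compact_continuous_image) (auto intro!: continuous_intros simp: case_prod_unfold)
qed

lemma lmeasurable_star_body: "continuous_on (sphere 0 1) \<rho> \<Longrightarrow> star_body \<rho> \<in> lmeasurable"
  by (intro lmeasurable_compact compact_star_body)

text \<open>The image is written with the affine map \<open>\<lambda>x. c *\<^sub>R x + 0\<close>, the form expected by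
  \<open>measure_lebesgue_affine\<close>.\<close>
lemma star_body_scale:
  assumes "0 < c"
  shows "star_body (\<lambda>u. c * \<rho> u) = (\<lambda>x. c *\<^sub>R x + 0) ` star_body \<rho>"
proof -
  have "x \<in> star_body (\<lambda>u. c * \<rho> u) \<longleftrightarrow> x /\<^sub>R c \<in> star_body \<rho>" for x :: 'a
  proof -
    have "(x /\<^sub>R c) /\<^sub>R norm (x /\<^sub>R c) = x /\<^sub>R norm x" "norm (x /\<^sub>R c) = norm x / c"
      "x /\<^sub>R c = 0 \<longleftrightarrow> x = 0"
      using assms by (simp_all add: divide_inverse_commute)
    then show ?thesis
      unfolding star_body_def mem_Collect_eq by (simp only: pos_divide_le_eq[OF assms] mult.commute)
  qed
  moreover have "x \<in> (\<lambda>x. c *\<^sub>R x + 0) ` S \<longleftrightarrow> x /\<^sub>R c \<in> S" for x and S :: "'a set"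
    using assms by (auto intro: image_eqI[where x="x /\<^sub>R c"])
  ultimately show ?thesis by blast
qed

lemma star_volume_scale:
  fixes \<rho> :: "'a::euclidean_space \<Rightarrow> real"
  assumes "0 < c"
  shows "star_volume (\<lambda>u. c * \<rho> u) = c ^ DIM('a) * star_volume \<rho>"
  using assms unfolding star_volume_def star_body_scale[OF assms] measure_lebesgue_affine by simp

lemma star_volume_divide:
  fixes \<rho> :: "'a::euclidean_space \<Rightarrow> real"
  assumes "0 < c"
  shows "star_volume (\<lambda>u. \<rho> u / c) = c powr (- real DIM('a)) * star_volume \<rho>"
  using star_volume_scale[of "1 / c" \<rho>] assms
  by (simp add: powr_minus powr_realpow power_one_over inverse_eq_divide)

text \<open>Where \<open>\<rho> u \<ge> t / 2\<close> the perturbation \<open>t\<^sup>2 / 2\<close> is absorbed by the dilation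
  factor \<open>1 \<plusminus> t\<close>; in the remaining directions the points lie in the ball of radius \<open>t\<close>.\<close>
lemma star_body_perturb_subset:
  assumes close: "\<And>u. norm u = 1 \<Longrightarrow> \<bar>\<sigma> u - \<rho> u\<bar> \<le> t\<^sup>2 / 2" and t: "0 < t" "t < 1"
  shows "star_body \<sigma> \<subseteq> star_body (\<lambda>u. (1 + t) * \<rho> u) \<union> cball 0 t"
    and "star_body (\<lambda>u. (1 - t) * \<rho> u) \<subseteq> star_body \<sigma> \<union> cball 0 t"
proof -
  have bounds: "(1 - t) * \<rho> u \<le> \<sigma> u \<and> \<sigma> u \<le> (1 + t) * \<rho> u \<or> (1 - t) * \<rho> u \<le> t \<and> \<sigma> u \<le> t"
    if "norm u = 1" for u
  proof -
    have \<sigma>: "\<sigma> u \<le> \<rho> u + t\<^sup>2 / 2" "\<rho> u - t\<^sup>2 / 2 \<le> \<sigma> u"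
      using abs_le_D1[OF close[OF that]] abs_le_D2[OF close[OF that]] by linarith+
    show ?thesis
    proof (cases "t / 2 \<le> \<rho> u")
      case True
      then have "t\<^sup>2 / 2 \<le> t * \<rho> u"
        using t mult_left_mono[OF True, of t] by (simp add: power2_eq_square)
      then show ?thesis using \<sigma> unfolding left_diff_distrib distrib_right by simp
    next
      case False
      then have "(1 - t) * \<rho> u \<le> (1 - t) * (t / 2)" "(1 - t) * (t / 2) \<le> t / 2" "t\<^sup>2 \<le> t"
        using t by (auto simp: power2_eq_square)
      then show ?thesis using \<sigma> t False by (intro disjI2) linarith
    qed
  qed
  show "star_body \<sigma> \<subseteq> star_body (\<lambda>u. (1 + t) * \<rho> u) \<union> cball 0 t"
  proof
    fix x :: 'a
    assume "x \<in> star_body \<sigma>"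
    then show "x \<in> star_body (\<lambda>u. (1 + t) * \<rho> u) \<union> cball 0 t"
      using bounds[of "x /\<^sub>R norm x"] by (cases "x = 0") (auto simp: star_body_def)
  qed
  show "star_body (\<lambda>u. (1 - t) * \<rho> u) \<subseteq> star_body \<sigma> \<union> cball 0 t"
  proof
    fix x :: 'a
    assume "x \<in> star_body (\<lambda>u. (1 - t) * \<rho> u)"
    then show "x \<in> star_body \<sigma> \<union> cball 0 t"
      using bounds[of "x /\<^sub>R norm x"] by (cases "x = 0") (auto simp: star_body_def)
  qed
qed

lemma star_volume_perturb_bounds:
  fixes \<rho> \<sigma> :: "'a::euclidean_space \<Rightarrow> real"
  assumes \<rho>: "continuous_on (sphere 0 1) \<rho>" and \<sigma>: "continuous_on (sphere 0 1) \<sigma>"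
    and close: "\<And>u. norm u = 1 \<Longrightarrow> \<bar>\<sigma> u - \<rho> u\<bar> \<le> t\<^sup>2 / 2" and t: "0 < t" "t < 1"
  shows "(1 - t) ^ DIM('a) * star_volume \<rho> - measure lebesgue (cball (0::'a) t) \<le> star_volume \<sigma>"
    and "star_volume \<sigma> \<le> (1 + t) ^ DIM('a) * star_volume \<rho> + measure lebesgue (cball (0::'a) t)"
proof -
  have scaled: "star_body (\<lambda>u. c * \<rho> u) \<in> lmeasurable" for c
    by (intro lmeasurable_star_body continuous_intros \<rho>)
  note subsets = star_body_perturb_subset[of \<sigma> \<rho> t, OF close t]
  have "(1 - t) ^ DIM('a) * star_volume \<rho> = measure lebesgue (star_body (\<lambda>u. (1 - t) * \<rho> u))"
    using star_volume_scale[of "1 - t" \<rho>] t by (simp add: star_volume_def)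
  also have "\<dots> \<le> measure lebesgue (star_body \<sigma> \<union> cball 0 t)"
    using subsets(2) lmeasurable_star_body[OF \<sigma>] scaled
    by (intro measure_mono_fmeasurable) (auto intro: fmeasurable.Un)
  also have "\<dots> \<le> star_volume \<sigma> + measure lebesgue (cball (0::'a) t)"
    using lmeasurable_star_body[OF \<sigma>] unfolding star_volume_def
    by (intro measure_Un_le) auto
  finally show "(1 - t) ^ DIM('a) * star_volume \<rho> - measure lebesgue (cball (0::'a) t) \<le> star_volume \<sigma>"
    by simp
  have "star_volume \<sigma> \<le> measure lebesgue (star_body (\<lambda>u. (1 + t) * \<rho> u) \<union> cball 0 t)"
    unfolding star_volume_def using subsets(1) lmeasurable_star_body[OF \<sigma>] scaled
    by (intro measure_mono_fmeasurable) (auto intro: fmeasurable.Un)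
  also have "\<dots> \<le> measure lebesgue (star_body (\<lambda>u. (1 + t) * \<rho> u)) + measure lebesgue (cball (0::'a) t)"
    using scaled by (intro measure_Un_le) auto
  also have "\<dots> = (1 + t) ^ DIM('a) * star_volume \<rho> + measure lebesgue (cball (0::'a) t)"
    using star_volume_scale[of "1 + t" \<rho>] t by (simp add: star_volume_def)
  finally show "star_volume \<sigma> \<le> (1 + t) ^ DIM('a) * star_volume \<rho> + measure lebesgue (cball (0::'a) t)" .
qed

lemma tendsto_by_parametrized_bounds:
  fixes g :: "'b \<Rightarrow> real" and lo hi :: "real \<Rightarrow> real"
  assumes bounds: "\<And>t. 0 < t \<Longrightarrow> t < 1 \<Longrightarrow> \<forall>\<^sub>F n in F. lo t \<le> g n \<and> g n \<le> hi t"
    and lo: "(lo \<longlongrightarrow> L) (at_right 0)" and hi: "(hi \<longlongrightarrow> L) (at_right 0)"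
  shows "(g \<longlongrightarrow> L) F"
proof (rule tendstoI)
  fix e :: real
  assume "0 < e"
  have "\<forall>\<^sub>F t in at_right (0::real). t < 1"
    unfolding eventually_at_right_field by (auto intro!: exI[of _ 1])
  then have "\<forall>\<^sub>F t in at_right 0. dist (lo t) L < e \<and> dist (hi t) L < e \<and> 0 < t \<and> t < 1"
    using tendstoD[OF lo \<open>0 < e\<close>] tendstoD[OF hi \<open>0 < e\<close>] eventually_at_right_less[of 0]
    by eventually_elim auto
  then obtain t where t: "dist (lo t) L < e" "dist (hi t) L < e" "0 < t" "t < 1"
    using eventually_happens[of _ "at_right (0::real)"] by auto
  show "\<forall>\<^sub>F n in F. dist (g n) L < e"
    using bounds[OF t(3,4)] by eventually_elim (use t(1,2) in \<open>auto simp: dist_real_def\<close>)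
qed

lemma tendsto_star_volume:
  fixes \<rho> :: "'a::euclidean_space \<Rightarrow> real"
  assumes lim: "uniform_limit (sphere 0 1) \<sigma> \<rho> F"
    and cont: "\<forall>\<^sub>F n in F. continuous_on (sphere 0 1) (\<sigma> n)" "continuous_on (sphere 0 1) \<rho>"
  shows "((\<lambda>n. star_volume (\<sigma> n)) \<longlongrightarrow> star_volume \<rho>) F"
proof (rule tendsto_by_parametrized_bounds)
  fix t :: real
  assume t: "0 < t" "t < 1"
  have "\<forall>\<^sub>F n in F. \<forall>u\<in>sphere 0 1. dist (\<sigma> n u) (\<rho> u) < t\<^sup>2 / 2"
    using lim[unfolded uniform_limit_iff, rule_format, of "t\<^sup>2 / 2"] t by simp
  with cont(1) show "\<forall>\<^sub>F n in F.
      (1 - t) ^ DIM('a) * star_volume \<rho> - measure lebesgue (cball (0::'a) t) \<le> star_volume (\<sigma> n) \<and>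
      star_volume (\<sigma> n) \<le> (1 + t) ^ DIM('a) * star_volume \<rho> + measure lebesgue (cball (0::'a) t)"
    by eventually_elim (intro conjI star_volume_perturb_bounds[OF cont(2)] t; force simp: dist_real_def)
next
  have "((\<lambda>t. measure lebesgue (cball (0::'a) t)) \<longlongrightarrow> 0) (at_right 0)"
  proof (rule Lim_transform_eventually)
    show "((\<lambda>t. unit_ball_vol (DIM('a)) * t ^ DIM('a)) \<longlongrightarrow> 0) (at_right 0)"
      by (auto intro!: tendsto_eq_intros)
    show "\<forall>\<^sub>F t in at_right 0. unit_ball_vol (DIM('a)) * t ^ DIM('a) = measure lebesgue (cball (0::'a) t)"
      using eventually_at_right_less[of 0] by eventually_elim (simp add: content_cball)
  qed
  then show "((\<lambda>t. (1 - t) ^ DIM('a) * star_volume \<rho> - measure lebesgue (cball (0::'a) t))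
      \<longlongrightarrow> star_volume \<rho>) (at_right 0)"
    and "((\<lambda>t. (1 + t) ^ DIM('a) * star_volume \<rho> + measure lebesgue (cball (0::'a) t))
      \<longlongrightarrow> star_volume \<rho>) (at_right 0)"
    by (auto intro!: tendsto_eq_intros)
qed


section \<open>Integrals of functions constant along a direction\<close>

lemma inner_add_scaleR_unit: "norm u = 1 \<Longrightarrow> (x + t *\<^sub>R u) \<bullet> u = x \<bullet> u + t"
  by (simp add: inner_add_left dot_square_norm)

lemma nn_integral_shift_along_invariant:
  fixes u :: "'a::euclidean_space" and G :: "'a \<Rightarrow> ennreal" and k :: "real \<Rightarrow> ennreal"
  assumes u: "norm u = 1" and [measurable]: "G \<in> borel_measurable borel" "k \<in> borel_measurable borel"
    and invariant: "\<And>x t. G (x + t *\<^sub>R u) = G x"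
  shows "(\<integral>\<^sup>+x. G x * k (x \<bullet> u - s) \<partial>lborel) = (\<integral>\<^sup>+x. G x * k (x \<bullet> u) \<partial>lborel)"
proof -
  have "(\<integral>\<^sup>+x. G x * k (x \<bullet> u - s) \<partial>lborel)
      = (\<integral>\<^sup>+x. G x * k (x \<bullet> u - s) \<partial>distr lborel borel ((+) (s *\<^sub>R u)))"
    by (simp add: lborel_distr_plus)
  also have "\<dots> = (\<integral>\<^sup>+x. G (s *\<^sub>R u + x) * k ((s *\<^sub>R u + x) \<bullet> u - s) \<partial>lborel)"
    by (simp add: nn_integral_distr)
  also have "\<dots> = (\<integral>\<^sup>+x. G x * k (x \<bullet> u) \<partial>lborel)"
    using invariant by (simp add: add.commute inner_add_scaleR_unit[OF u])
  finally show ?thesis .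
qed

text \<open>The image of \<open>G x dx\<close> under \<open>\<lambda>x. x \<bullet> u\<close> is translation invariant, hence a multiple of
  Lebesgue measure. Rather than proving that uniqueness result, the proof averages the shift over
  the unit interval and applies Tonelli's theorem twice.\<close>
lemma nn_integral_invariant_profile:
  fixes u :: "'a::euclidean_space" and G :: "'a \<Rightarrow> ennreal" and k :: "real \<Rightarrow> ennreal"
  assumes u: "norm u = 1" and [measurable]: "G \<in> borel_measurable borel" "k \<in> borel_measurable borel"
    and invariant: "\<And>x t. G (x + t *\<^sub>R u) = G x"
  shows "(\<integral>\<^sup>+x. G x * k (x \<bullet> u) \<partial>lborel)
       = (\<integral>\<^sup>+x. G x * indicator {0..1} (x \<bullet> u) \<partial>lborel) * (\<integral>\<^sup>+t. k t \<partial>lborel)"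
proof -
  let ?B = "indicator {0..1} :: real \<Rightarrow> ennreal"
  have reflect: "(\<integral>\<^sup>+s. ?B s * k (t - s) \<partial>lborel) = (\<integral>\<^sup>+r. k r * ?B (t - r) \<partial>lborel)" for t
    by (subst nn_integral_real_affine[where c="-1" and t=t]) (simp_all add: mult.commute)
  have "(\<integral>\<^sup>+x. G x * k (x \<bullet> u) \<partial>lborel) = (\<integral>\<^sup>+s. ?B s * (\<integral>\<^sup>+x. G x * k (x \<bullet> u) \<partial>lborel) \<partial>lborel)"
    by (simp add: nn_integral_multc)
  also have "\<dots> = (\<integral>\<^sup>+s. (\<integral>\<^sup>+x. ?B s * (G x * k (x \<bullet> u - s)) \<partial>lborel) \<partial>lborel)"
    by (simp add: nn_integral_cmult nn_integral_shift_along_invariant[OF u _ _ invariant])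
  also have "\<dots> = (\<integral>\<^sup>+x. G x * (\<integral>\<^sup>+s. ?B s * k (x \<bullet> u - s) \<partial>lborel) \<partial>lborel)"
    by (subst lborel_pair.Fubini') (simp_all add: nn_integral_cmult[symmetric] mult.left_commute)
  also have "\<dots> = (\<integral>\<^sup>+x. G x * (\<integral>\<^sup>+r. k r * ?B (x \<bullet> u - r) \<partial>lborel) \<partial>lborel)"
    by (simp only: reflect)
  also have "\<dots> = (\<integral>\<^sup>+x. (\<integral>\<^sup>+r. k r * (G x * ?B (x \<bullet> u - r)) \<partial>lborel) \<partial>lborel)"
    by (simp add: nn_integral_cmult[symmetric] mult.left_commute)
  also have "\<dots> = (\<integral>\<^sup>+r. (\<integral>\<^sup>+x. k r * (G x * ?B (x \<bullet> u - r)) \<partial>lborel) \<partial>lborel)"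
    by (rule lborel_pair.Fubini') simp
  also have "\<dots> = (\<integral>\<^sup>+x. G x * ?B (x \<bullet> u) \<partial>lborel) * (\<integral>\<^sup>+t. k t \<partial>lborel)"
    by (simp add: nn_integral_cmult nn_integral_shift_along_invariant[OF u _ _ invariant]
        nn_integral_multc mult.commute)
  finally show ?thesis .
qed

lemma nn_integral_inverse_sqrt_Icc:
  fixes \<alpha> \<delta> :: real
  assumes "0 < \<alpha>" "0 \<le> \<delta>"
  shows "(\<integral>\<^sup>+t. ennreal (1 / sqrt (t\<^sup>2 + \<alpha>\<^sup>2)) * indicator {-\<delta>..\<delta>} t \<partial>lborel) = ennreal (2 * arsinh (\<delta> / \<alpha>))"
proof -
  have "((\<lambda>t. arsinh (t / \<alpha>)) has_real_derivative 1 / sqrt (t\<^sup>2 + \<alpha>\<^sup>2)) (at t)" for t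
  proof -
    have "sqrt ((t / \<alpha>)\<^sup>2 + 1) * \<alpha> = sqrt (((t / \<alpha>)\<^sup>2 + 1) * \<alpha>\<^sup>2)"
      using assms by (simp add: real_sqrt_mult)
    also have "((t / \<alpha>)\<^sup>2 + 1) * \<alpha>\<^sup>2 = t\<^sup>2 + \<alpha>\<^sup>2"
      using assms by (simp add: field_simps power2_eq_square)
    finally have "1 / sqrt ((t / \<alpha>)\<^sup>2 + 1) * (1 / \<alpha>) = 1 / sqrt (t\<^sup>2 + \<alpha>\<^sup>2)"
      by (metis divide_divide_eq_left times_divide_eq_right mult_1_right)
    moreover have "((\<lambda>t. arsinh (t / \<alpha>)) has_real_derivative
        1 / sqrt ((t / \<alpha>)\<^sup>2 + 1) * (1 / \<alpha>)) (at t)"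
      using assms by (intro DERIV_chain2[OF arsinh_real_has_field_derivative])
        (auto intro!: derivative_eq_intros)
    ultimately show ?thesis by simp
  qed
  then have "(\<integral>\<^sup>+t. ennreal (1 / sqrt (t\<^sup>2 + \<alpha>\<^sup>2)) * indicator {-\<delta>..\<delta>} t \<partial>lborel)
      = ennreal (arsinh (\<delta> / \<alpha>) - arsinh (-\<delta> / \<alpha>))"
    using assms by (intro nn_integral_FTC_Icc) auto
  then show ?thesis by simp
qed

definition hyperplane_proj :: "'a::real_inner \<Rightarrow> 'a \<Rightarrow> 'a" where
  "hyperplane_proj u x = x - (x \<bullet> u) *\<^sub>R u"

definition slab_mass :: "('a::euclidean_space \<Rightarrow> real) \<Rightarrow> 'a \<Rightarrow> ennreal" where
  "slab_mass g u = (\<integral>\<^sup>+x. ennreal (g (hyperplane_proj u x)) * indicator {0..1} (x \<bullet> u) \<partial>lborel)"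

lemma borel_measurable_hyperplane_proj [measurable]:
  "hyperplane_proj u \<in> borel_measurable (borel :: 'a::euclidean_space measure)"
  unfolding hyperplane_proj_def by measurable

lemma sets_borel_cball [measurable]: "cball c r \<in> sets borel"
  by simp

lemma hyperplane_proj_add_scaleR:
  assumes "norm u = 1"
  shows "hyperplane_proj u (x + t *\<^sub>R u) = hyperplane_proj u x"
  unfolding hyperplane_proj_def inner_add_scaleR_unit[OF assms] by (simp add: algebra_simps)

lemma dist_hyperplane_proj: "norm u = 1 \<Longrightarrow> dist x (hyperplane_proj u x) = \<bar>x \<bullet> u\<bar>"
  by (simp add: hyperplane_proj_def dist_norm)

lemma norm_hyperplane_proj_le:
  assumes "norm u = 1"
  shows "norm (hyperplane_proj u x) \<le> norm x"
proof -
  have "(norm x)\<^sup>2 = (norm (hyperplane_proj u x))\<^sup>2 + (x \<bullet> u)\<^sup>2"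
    using assms unfolding hyperplane_proj_def power2_norm_eq_inner norm_eq_1
    by (simp add: inner_diff_left inner_diff_right inner_commute power2_eq_square)
  then show ?thesis
    by (metis le_add_same_cancel1 norm_ge_zero power2_le_imp_le zero_le_power2)
qed

lemma norm_le_hyperplane_proj_add: "norm u = 1 \<Longrightarrow> norm x \<le> norm (hyperplane_proj u x) + \<bar>x \<bullet> u\<bar>"
  using norm_triangle_ineq[of "hyperplane_proj u x" "(x \<bullet> u) *\<^sub>R u"] by (simp add: hyperplane_proj_def)

lemma nn_integral_slab_kernel:
  fixes u :: "'a::euclidean_space" and g :: "'a \<Rightarrow> real"
  assumes u: "norm u = 1" and "0 < \<alpha>" "0 \<le> \<delta>"
    and [measurable]: "g \<in> borel_measurable borel" and "\<And>x. 0 \<le> g x"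
  shows "(\<integral>\<^sup>+x. ennreal (g (hyperplane_proj u x) * (indicator {-\<delta>..\<delta>} (x \<bullet> u) / sqrt ((x \<bullet> u)\<^sup>2 + \<alpha>\<^sup>2)))
      \<partial>lborel) = slab_mass g u * ennreal (2 * arsinh (\<delta> / \<alpha>))"
proof -
  define k where "k t = indicator {-\<delta>..\<delta>} t / sqrt (t\<^sup>2 + \<alpha>\<^sup>2)" for t :: real
  have [measurable]: "k \<in> borel_measurable borel"
    unfolding k_def by measurable
  have "(\<integral>\<^sup>+t. ennreal (k t) \<partial>lborel) = ennreal (2 * arsinh (\<delta> / \<alpha>))"
    using nn_integral_inverse_sqrt_Icc[OF assms(2,3)] by (simp add: k_def indicator_mult_ennreal mult.commute)
  moreover have "ennreal (g (hyperplane_proj u x) * k t) = ennreal (g (hyperplane_proj u x)) * ennreal (k t)" for x t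
    using assms(5) by (intro ennreal_mult) (simp_all add: k_def)
  ultimately show ?thesis
    using nn_integral_invariant_profile[OF u, of "\<lambda>x. ennreal (g (hyperplane_proj u x))" "\<lambda>t. ennreal (k t)"]
    by (simp add: k_def[symmetric] slab_mass_def hyperplane_proj_add_scaleR[OF u])
qed

lemma rho_I_eq_enn2real:
  fixes f :: "'a::euclidean_space \<Rightarrow> real"
  assumes [measurable]: "f \<in> borel_measurable borel" and "\<And>x. 0 \<le> f x"
  shows "rho_I f u = enn2real (slab_mass f u)"
proof -
  have "rho_I f u = (\<integral>x. indicator {0..1} (x \<bullet> u) * f (hyperplane_proj u x) \<partial>lborel)"
    unfolding rho_I_def hyperplane_integral_def set_lebesgue_integral_def hyperplane_proj_def
    by (subst integral_completion) (auto simp: indicator_def)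
  also have "\<dots> = enn2real (slab_mass f u)"
    unfolding slab_mass_def using assms
    by (subst integral_eq_nn_integral) (auto simp: indicator_def intro!: arg_cong[where f=enn2real] nn_integral_cong)
  finally show ?thesis .
qed

lemma rho_I_alpha_eq_enn2real:
  fixes f :: "'a::euclidean_space \<Rightarrow> real"
  assumes [measurable]: "f \<in> borel_measurable borel" and "\<And>x. 0 \<le> f x" and "norm u = 1"
  shows "rho_I_alpha \<alpha> f u = enn2real (\<integral>\<^sup>+x. ennreal (f x / sqrt ((x \<bullet> u)\<^sup>2 + \<alpha>\<^sup>2)) \<partial>lborel)"
  using assms unfolding rho_I_alpha_def
  by (subst integral_completion) (auto intro!: integral_eq_nn_integral)

section \<open>Uniform convergence of the rescaled radial functions\<close>

lemma arsinh_mult_ge: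
  fixes c x :: real
  assumes c: "0 < c" "c \<le> 1" and x: "0 < x"
  shows "arsinh x + ln c \<le> arsinh (c * x)"
proof -
  have "c * sqrt (x\<^sup>2 + 1) = sqrt (c\<^sup>2 * (x\<^sup>2 + 1))"
    using c by (simp add: real_sqrt_mult)
  also have "\<dots> = sqrt ((c * x)\<^sup>2 + c\<^sup>2)"
    by (simp add: power_mult_distrib distrib_left)
  also have "\<dots> \<le> sqrt ((c * x)\<^sup>2 + 1)"
    using c by (simp add: power_le_one)
  finally have "c * (x + sqrt (x\<^sup>2 + 1)) \<le> c * x + sqrt ((c * x)\<^sup>2 + 1)"
    by (simp add: distrib_left)
  then have "ln (c * (x + sqrt (x\<^sup>2 + 1))) \<le> ln (c * x + sqrt ((c * x)\<^sup>2 + 1))"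
    using c arsinh_real_aux[of x] arsinh_real_aux[of "c * x"] by (subst ln_le_cancel_iff) auto
  then show ?thesis
    using c arsinh_real_aux[of x] by (simp add: arsinh_real_def ln_mult)
qed

lemma filterlim_arsinh_inverse: "filterlim (\<lambda>\<alpha>. arsinh (1 / \<alpha>)) at_top (at_right (0::real))"
  using filterlim_compose[OF arsinh_real_at_top filterlim_inverse_at_top_right]
  by (simp add: inverse_eq_divide)

lemma uniform_limitI_vanishing_error:
  fixes g :: "'b \<Rightarrow> 'a \<Rightarrow> real" and s :: "'b \<Rightarrow> real"
  assumes s: "filterlim s at_top F"
    and bound: "\<And>e. 0 < e \<Longrightarrow> \<exists>K. \<forall>\<^sub>F x in F. \<forall>u\<in>S. \<bar>g x u - h u\<bar> \<le> e + K / s x"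
  shows "uniform_limit S g h F"
  unfolding uniform_limit_iff
proof (intro allI impI)
  fix e :: real
  assume "0 < e"
  then obtain K where K: "\<forall>\<^sub>F x in F. \<forall>u\<in>S. \<bar>g x u - h u\<bar> \<le> e / 2 + K / s x"
    using bound[of "e / 2"] by auto
  have "\<forall>\<^sub>F x in F. 2 * \<bar>K\<bar> / e + 1 \<le> s x"
    using s by (simp add: filterlim_at_top)
  with K show "\<forall>\<^sub>F x in F. \<forall>u\<in>S. dist (g x u) (h u) < e"
  proof eventually_elim
    case (elim x)
    moreover have "0 \<le> 2 * \<bar>K\<bar> / e"
      using \<open>0 < e\<close> by simp
    ultimately have "0 < s x" and "2 * \<bar>K\<bar> / e < s x"
      by linarith+
    then have "2 * \<bar>K\<bar> < s x * e"
      using \<open>0 < e\<close> by (simp add: divide_less_eq)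
    then have "K / s x < e / 2"
      using \<open>0 < s x\<close> abs_ge_self[of K] by (simp add: divide_less_eq mult.commute)
    show ?case
    proof
      fix u
      assume "u \<in> S"
      then have "\<bar>g x u - h u\<bar> \<le> e / 2 + K / s x"
        using elim by blast
      then show "dist (g x u) (h u) < e"
        unfolding dist_real_def using \<open>K / s x < e / 2\<close> by linarith
    qed
  qed
qed

lemma continuous_on_integral_inverse_sqrt:
  fixes f :: "'a::euclidean_space \<Rightarrow> real"
  assumes f: "integrable lborel f" and \<alpha>: "0 < \<alpha>"
  shows "continuous_on S (\<lambda>u. \<integral>x. f x / sqrt ((x \<bullet> u)\<^sup>2 + \<alpha>\<^sup>2) \<partial>lborel)"
proof (rule continuous_on_sequentiallyI)
  fix v :: "nat \<Rightarrow> 'a" and u :: 'a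
  assume lim: "v \<longlonglongrightarrow> u"
  have pos: "\<alpha> \<le> sqrt (t\<^sup>2 + \<alpha>\<^sup>2)" for t
    using \<alpha> by (intro real_le_rsqrt) auto
  show "(\<lambda>n. \<integral>x. f x / sqrt ((x \<bullet> v n)\<^sup>2 + \<alpha>\<^sup>2) \<partial>lborel) \<longlonglongrightarrow> (\<integral>x. f x / sqrt ((x \<bullet> u)\<^sup>2 + \<alpha>\<^sup>2) \<partial>lborel)"
  proof (rule integral_dominated_convergence[where w="\<lambda>x. \<bar>f x\<bar> / \<alpha>"])
    show "AE x in lborel. (\<lambda>n. f x / sqrt ((x \<bullet> v n)\<^sup>2 + \<alpha>\<^sup>2)) \<longlonglongrightarrow> f x / sqrt ((x \<bullet> u)\<^sup>2 + \<alpha>\<^sup>2)"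
      using pos \<alpha> by (intro AE_I2 tendsto_intros lim) (auto intro: order.strict_trans2)
    show "AE x in lborel. norm (f x / sqrt ((x \<bullet> v n)\<^sup>2 + \<alpha>\<^sup>2)) \<le> \<bar>f x\<bar> / \<alpha>" for n
      using pos \<alpha> by (intro AE_I2) (auto simp: abs_divide intro!: divide_left_mono mult_pos_pos add_nonneg_pos)
  qed (use f \<alpha> in auto)
qed

locale compactly_supported_density =
  fixes f :: "'a::euclidean_space \<Rightarrow> real" and M R :: real
  assumes continuous_density: "continuous_on UNIV f"
    and density_nonneg: "\<And>x. 0 \<le> f x"
    and density_le: "\<And>x. f x \<le> M"
    and density_vanishes: "\<And>x. R < norm x \<Longrightarrow> f x = 0"
    and nn_integral_density: "(\<integral>\<^sup>+x. f x \<partial>lborel) = 1"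
begin

lemma measurable_density [measurable]: "f \<in> borel_measurable borel"
  using continuous_density by (rule borel_measurable_continuous_onI)

lemma integrable_density: "integrable lborel f"
  using nn_integral_density by (intro integrableI_nonneg) (auto simp: density_nonneg)

lemma slab_mass_cylinder_le:
  fixes u :: 'a
  assumes u: "norm u = 1"
  shows "slab_mass (indicator (cball 0 R)) u \<le> emeasure lborel (cball (0::'a) (R + 1))"
proof -
  have "ennreal (indicator (cball 0 R) (hyperplane_proj u x)) * indicator {0..1} (x \<bullet> u)
      \<le> (indicator (cball 0 (R + 1)) x :: ennreal)" for x
    using norm_le_hyperplane_proj_add[OF u, of x] by (auto simp: indicator_def)
  then have "slab_mass (indicator (cball 0 R)) u \<le> (\<integral>\<^sup>+x. indicator (cball (0::'a) (R + 1)) x \<partial>lborel)"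
    unfolding slab_mass_def by (intro nn_integral_mono)
  then show ?thesis by simp
qed

lemma density_bound_nonneg: "0 \<le> M"
  using density_nonneg[of 0] density_le[of 0] by linarith

lemma slab_mass_density_le:
  fixes u :: 'a
  assumes u: "norm u = 1"
  shows "slab_mass f u \<le> ennreal (M * measure lborel (cball (0::'a) (R + 1)))"
proof -
  have "ennreal (f (hyperplane_proj u x)) * indicator {0..1} (x \<bullet> u)
      \<le> ennreal M * (ennreal (indicator (cball 0 R) (hyperplane_proj u x)) * indicator {0..1} (x \<bullet> u))" for x
    using density_le[of "hyperplane_proj u x"] density_vanishes[of "hyperplane_proj u x"]
    by (auto simp: indicator_def ennreal_leI)
  then have "slab_mass f u \<le> ennreal M * slab_mass (indicator (cball 0 R)) u"
    unfolding slab_mass_def by (subst nn_integral_cmult[symmetric]) (auto intro: nn_integral_mono)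
  also have "\<dots> \<le> ennreal M * emeasure lborel (cball (0::'a) (R + 1))"
    using slab_mass_cylinder_le[OF u] by (rule mult_left_mono) simp
  finally show ?thesis
    using emeasure_lborel_cball_finite[of "0::'a" "R + 1"] density_bound_nonneg
    by (simp add: emeasure_eq_ennreal_measure ennreal_mult)
qed

lemma ennreal_rho_I:
  fixes u :: 'a
  assumes "norm u = 1"
  shows "ennreal (rho_I f u) = slab_mass f u"
  using le_less_trans[OF slab_mass_density_le[OF assms] ennreal_less_top]
  by (simp add: rho_I_eq_enn2real density_nonneg)

lemma rho_I_le:
  fixes u :: 'a
  assumes "norm u = 1"
  shows "rho_I f u \<le> M * measure lborel (cball (0::'a) (R + 1))"
  using slab_mass_density_le[OF assms] density_bound_nonneg
  by (simp flip: ennreal_rho_I[OF assms] add: ennreal_le_iff)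

lemma ennreal_rho_I_alpha:
  fixes u :: 'a
  assumes u: "norm u = 1" and \<alpha>: "0 < \<alpha>"
  shows "ennreal (rho_I_alpha \<alpha> f u) = (\<integral>\<^sup>+x. ennreal (f x / sqrt ((x \<bullet> u)\<^sup>2 + \<alpha>\<^sup>2)) \<partial>lborel)"
proof -
  have "f x / sqrt ((x \<bullet> u)\<^sup>2 + \<alpha>\<^sup>2) \<le> f x / \<alpha>" for x
    using \<alpha> density_nonneg[of x]
    by (intro divide_left_mono real_le_rsqrt) (auto intro!: mult_pos_pos add_nonneg_pos)
  then have "(\<integral>\<^sup>+x. ennreal (f x / sqrt ((x \<bullet> u)\<^sup>2 + \<alpha>\<^sup>2)) \<partial>lborel)
      \<le> (\<integral>\<^sup>+x. ennreal (1 / \<alpha>) * ennreal (f x) \<partial>lborel)"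
    using \<alpha> density_nonneg by (intro nn_integral_mono) (simp add: ennreal_mult[symmetric] ennreal_leI)
  also have "\<dots> = ennreal (1 / \<alpha>)"
    by (simp add: nn_integral_cmult nn_integral_density)
  finally show ?thesis
    using u density_nonneg le_less_trans[OF _ ennreal_less_top] by (subst rho_I_alpha_eq_enn2real) auto
qed

lemma continuous_on_rho_I_alpha:
  assumes "0 < \<alpha>"
  shows "continuous_on (sphere 0 1) (rho_I_alpha \<alpha> f)"
proof (rule continuous_on_cong[THEN iffD1, OF refl _ continuous_on_integral_inverse_sqrt[OF integrable_density assms]])
  show "(\<integral>x. f x / sqrt ((x \<bullet> u)\<^sup>2 + \<alpha>\<^sup>2) \<partial>lborel) = rho_I_alpha \<alpha> f u" if "u \<in> sphere 0 1" for u
    using that unfolding rho_I_alpha_def by (subst integral_completion) auto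
qed

end

locale slab_setting = compactly_supported_density f M R
  for f :: "'a::euclidean_space \<Rightarrow> real" and M R :: real +
  fixes u :: 'a and \<alpha> \<delta> \<epsilon> :: real
  assumes unit: "norm u = 1" and alpha_pos: "0 < \<alpha>" and delta_pos: "0 < \<delta>" and delta_le_1: "\<delta> \<le> 1"
    and eps_nonneg: "0 \<le> \<epsilon>"
    and modulus: "\<And>x y. x \<in> cball 0 (R + 1) \<Longrightarrow> y \<in> cball 0 (R + 1) \<Longrightarrow> dist x y \<le> \<delta> \<Longrightarrow>
      \<bar>f x - f y\<bar> \<le> \<epsilon>"
begin

definition kernel :: "real \<Rightarrow> real" where
  "kernel t = indicator {-\<delta>..\<delta>} t / sqrt (t\<^sup>2 + \<alpha>\<^sup>2)"

lemma kernel_nonneg: "0 \<le> kernel t"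
  by (simp add: kernel_def)

lemma borel_measurable_kernel [measurable]: "kernel \<in> borel_measurable borel"
  unfolding kernel_def by measurable

lemma density_near_hyperplane:
  assumes "\<bar>x \<bullet> u\<bar> \<le> \<delta>"
  shows "\<bar>f x - f (hyperplane_proj u x)\<bar> \<le> \<epsilon> * indicator (cball 0 R) (hyperplane_proj u x)"
proof (cases "norm (hyperplane_proj u x) \<le> R")
  case True
  then have "x \<in> cball 0 (R + 1)"
    using norm_le_hyperplane_proj_add[OF unit, of x] assms delta_le_1 by simp
  moreover have "dist x (hyperplane_proj u x) \<le> \<delta>"
    using assms by (simp add: dist_hyperplane_proj[OF unit])
  ultimately show ?thesis
    using modulus True by simp
next
  case False
  then have "f x = 0" "f (hyperplane_proj u x) = 0"
    using density_vanishes norm_hyperplane_proj_le[OF unit, of x] by auto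
  then show ?thesis using False by simp
qed

lemma density_kernel_bounds:
  fixes x :: 'a
  defines "g \<equiv> f (hyperplane_proj u x)" and "c \<equiv> indicator (cball 0 R) (hyperplane_proj u x)"
    and "h \<equiv> 1 / sqrt ((x \<bullet> u)\<^sup>2 + \<alpha>\<^sup>2)"
  shows "f x * h \<le> g * kernel (x \<bullet> u) + \<epsilon> * (c * kernel (x \<bullet> u)) + f x * (1 / \<delta>)"
    and "g * kernel (x \<bullet> u) \<le> f x * h + \<epsilon> * (c * kernel (x \<bullet> u))"
proof -
  let ?k = "kernel (x \<bullet> u)"
  have "0 \<le> h" "0 \<le> f x"
    unfolding h_def by (simp_all add: density_nonneg)
  have "f x * h \<le> g * ?k + \<epsilon> * (c * ?k) + f x * (1 / \<delta>) \<and> g * ?k \<le> f x * h + \<epsilon> * (c * ?k)"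
  proof (cases "\<bar>x \<bullet> u\<bar> \<le> \<delta>")
    case True
    then have "f x \<le> g + \<epsilon> * c" "g \<le> f x + \<epsilon> * c" and "?k = h"
      unfolding g_def c_def h_def kernel_def using density_near_hyperplane[OF True]
      by (auto simp: indicator_def abs_le_iff)
    then have "f x * h \<le> (g + \<epsilon> * c) * ?k" "g * ?k \<le> (f x + \<epsilon> * c) * h"
      using \<open>0 \<le> h\<close> by (simp_all add: mult_right_mono)
    moreover have "0 \<le> f x * (1 / \<delta>)"
      using \<open>0 \<le> f x\<close> delta_pos by simp
    ultimately show ?thesis
      using \<open>?k = h\<close> by (simp add: distrib_right mult.assoc)
  next
    case False
    have "\<bar>x \<bullet> u\<bar> \<le> sqrt ((x \<bullet> u)\<^sup>2 + \<alpha>\<^sup>2)"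
      by (intro real_le_rsqrt) simp
    then have "\<delta> \<le> sqrt ((x \<bullet> u)\<^sup>2 + \<alpha>\<^sup>2)"
      using False by linarith
    then have "h \<le> 1 / \<delta>"
      unfolding h_def using delta_pos alpha_pos
      by (intro divide_left_mono) (auto intro!: mult_pos_pos add_nonneg_pos)
    then have "f x * h \<le> f x * (1 / \<delta>)"
      using \<open>0 \<le> f x\<close> by (rule mult_left_mono)
    moreover have "?k = 0"
      unfolding kernel_def using False by (auto simp: indicator_def)
    ultimately show ?thesis
      using \<open>0 \<le> h\<close> \<open>0 \<le> f x\<close> by simp
  qed
  then show "f x * h \<le> g * ?k + \<epsilon> * (c * ?k) + f x * (1 / \<delta>)" "g * ?k \<le> f x * h + \<epsilon> * (c * ?k)"
    by auto
qed

lemma slab_kernel_integrals: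
  shows "(\<integral>\<^sup>+x. ennreal (f (hyperplane_proj u x) * kernel (x \<bullet> u)) \<partial>lborel)
      = slab_mass f u * ennreal (2 * arsinh (\<delta> / \<alpha>))"
    and "(\<integral>\<^sup>+x. ennreal (indicator (cball 0 R) (hyperplane_proj u x) * kernel (x \<bullet> u)) \<partial>lborel)
      \<le> emeasure lborel (cball (0::'a) (R + 1)) * ennreal (2 * arsinh (\<delta> / \<alpha>))"
proof -
  show "(\<integral>\<^sup>+x. ennreal (f (hyperplane_proj u x) * kernel (x \<bullet> u)) \<partial>lborel)
      = slab_mass f u * ennreal (2 * arsinh (\<delta> / \<alpha>))"
    unfolding kernel_def using alpha_pos delta_pos density_nonneg
    by (intro nn_integral_slab_kernel[OF unit]) auto
  have "(\<integral>\<^sup>+x. ennreal (indicator (cball 0 R) (hyperplane_proj u x) * kernel (x \<bullet> u)) \<partial>lborel)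
      = slab_mass (indicator (cball 0 R)) u * ennreal (2 * arsinh (\<delta> / \<alpha>))"
    unfolding kernel_def using alpha_pos delta_pos
    by (intro nn_integral_slab_kernel[OF unit]) (auto intro: borel_measurable_indicator)
  also have "\<dots> \<le> emeasure lborel (cball (0::'a) (R + 1)) * ennreal (2 * arsinh (\<delta> / \<alpha>))"
    using slab_mass_cylinder_le[OF unit] by (rule mult_right_mono) simp
  finally show "(\<integral>\<^sup>+x. ennreal (indicator (cball 0 R) (hyperplane_proj u x) * kernel (x \<bullet> u)) \<partial>lborel)
      \<le> emeasure lborel (cball (0::'a) (R + 1)) * ennreal (2 * arsinh (\<delta> / \<alpha>))" .
qed

lemma slab_upper_bound:
  "(\<integral>\<^sup>+x. ennreal (f x / sqrt ((x \<bullet> u)\<^sup>2 + \<alpha>\<^sup>2)) \<partial>lborel)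
    \<le> slab_mass f u * ennreal (2 * arsinh (\<delta> / \<alpha>))
      + ennreal \<epsilon> * emeasure lborel (cball (0::'a) (R + 1)) * ennreal (2 * arsinh (\<delta> / \<alpha>)) + ennreal (1 / \<delta>)"
proof -
  define g where "g x = f (hyperplane_proj u x)" for x
  define c :: "'a \<Rightarrow> real" where "c x = indicator (cball 0 R) (hyperplane_proj u x)" for x
  have [measurable]: "g \<in> borel_measurable borel" "c \<in> borel_measurable borel"
    unfolding g_def c_def by measurable
  have "ennreal (f x / sqrt ((x \<bullet> u)\<^sup>2 + \<alpha>\<^sup>2))
      \<le> ennreal (g x * kernel (x \<bullet> u)) + ennreal \<epsilon> * ennreal (c x * kernel (x \<bullet> u))
        + ennreal (1 / \<delta>) * ennreal (f x)" for x
  proof -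
    have "0 \<le> g x * kernel (x \<bullet> u)" "0 \<le> c x * kernel (x \<bullet> u)" "0 \<le> f x"
      by (simp_all add: g_def c_def kernel_nonneg density_nonneg)
    moreover have "f x / sqrt ((x \<bullet> u)\<^sup>2 + \<alpha>\<^sup>2)
        \<le> g x * kernel (x \<bullet> u) + \<epsilon> * (c x * kernel (x \<bullet> u)) + 1 / \<delta> * f x"
      using density_kernel_bounds(1)[of x] by (simp add: g_def c_def mult.commute)
    ultimately show ?thesis
      using eps_nonneg delta_pos
      by (simp add: ennreal_plus[symmetric] ennreal_mult[symmetric] del: ennreal_plus)
  qed
  then have "(\<integral>\<^sup>+x. ennreal (f x / sqrt ((x \<bullet> u)\<^sup>2 + \<alpha>\<^sup>2)) \<partial>lborel)
      \<le> (\<integral>\<^sup>+x. ennreal (g x * kernel (x \<bullet> u)) + ennreal \<epsilon> * ennreal (c x * kernel (x \<bullet> u))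
        + ennreal (1 / \<delta>) * ennreal (f x) \<partial>lborel)"
    by (intro nn_integral_mono)
  also have "\<dots> = (\<integral>\<^sup>+x. ennreal (g x * kernel (x \<bullet> u)) \<partial>lborel)
      + ennreal \<epsilon> * (\<integral>\<^sup>+x. ennreal (c x * kernel (x \<bullet> u)) \<partial>lborel) + ennreal (1 / \<delta>)"
    by (simp add: nn_integral_add nn_integral_cmult nn_integral_density)
  finally show ?thesis
    unfolding g_def c_def slab_kernel_integrals(1) using slab_kernel_integrals(2)
    by (elim order_trans) (auto simp: mult.assoc intro!: add_mono mult_left_mono)
qed

lemma slab_lower_bound:
  "slab_mass f u * ennreal (2 * arsinh (\<delta> / \<alpha>))
    \<le> (\<integral>\<^sup>+x. ennreal (f x / sqrt ((x \<bullet> u)\<^sup>2 + \<alpha>\<^sup>2)) \<partial>lborel)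
      + ennreal \<epsilon> * emeasure lborel (cball (0::'a) (R + 1)) * ennreal (2 * arsinh (\<delta> / \<alpha>))"
proof -
  define g where "g x = f (hyperplane_proj u x)" for x
  define c :: "'a \<Rightarrow> real" where "c x = indicator (cball 0 R) (hyperplane_proj u x)" for x
  have [measurable]: "g \<in> borel_measurable borel" "c \<in> borel_measurable borel"
    unfolding g_def c_def by measurable
  have "ennreal (g x * kernel (x \<bullet> u))
      \<le> ennreal (f x / sqrt ((x \<bullet> u)\<^sup>2 + \<alpha>\<^sup>2)) + ennreal \<epsilon> * ennreal (c x * kernel (x \<bullet> u))" for x
  proof -
    have "0 \<le> f x / sqrt ((x \<bullet> u)\<^sup>2 + \<alpha>\<^sup>2)" "0 \<le> c x * kernel (x \<bullet> u)"
      by (simp_all add: c_def kernel_nonneg density_nonneg)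
    moreover have "g x * kernel (x \<bullet> u) \<le> f x / sqrt ((x \<bullet> u)\<^sup>2 + \<alpha>\<^sup>2) + \<epsilon> * (c x * kernel (x \<bullet> u))"
      using density_kernel_bounds(2)[of x] by (simp add: g_def c_def)
    ultimately show ?thesis
      using eps_nonneg by (simp add: ennreal_plus[symmetric] ennreal_mult[symmetric] del: ennreal_plus)
  qed
  then have "(\<integral>\<^sup>+x. ennreal (g x * kernel (x \<bullet> u)) \<partial>lborel)
      \<le> (\<integral>\<^sup>+x. ennreal (f x / sqrt ((x \<bullet> u)\<^sup>2 + \<alpha>\<^sup>2)) + ennreal \<epsilon> * ennreal (c x * kernel (x \<bullet> u)) \<partial>lborel)"
    by (intro nn_integral_mono)
  also have "\<dots> = (\<integral>\<^sup>+x. ennreal (f x / sqrt ((x \<bullet> u)\<^sup>2 + \<alpha>\<^sup>2)) \<partial>lborel)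
      + ennreal \<epsilon> * (\<integral>\<^sup>+x. ennreal (c x * kernel (x \<bullet> u)) \<partial>lborel)"
    by (simp add: nn_integral_add nn_integral_cmult)
  finally show ?thesis
    unfolding g_def c_def slab_kernel_integrals(1) using slab_kernel_integrals(2)
    by (elim order_trans) (auto simp: mult.assoc intro!: add_mono mult_left_mono)
qed

lemma slab_estimate:
  "\<bar>rho_I_alpha \<alpha> f u - 2 * arsinh (\<delta> / \<alpha>) * rho_I f u\<bar>
    \<le> 1 / \<delta> + \<epsilon> * measure lborel (cball (0::'a) (R + 1)) * (2 * arsinh (\<delta> / \<alpha>))"
proof -
  define a where "a = 2 * arsinh (\<delta> / \<alpha>)"
  define C where "C = measure lborel (cball (0::'a) (R + 1))"
  have "0 < arsinh (\<delta> / \<alpha>)"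
    using alpha_pos delta_pos by simp
  then have "0 \<le> a" "0 \<le> C" "0 \<le> rho_I f u" "0 \<le> rho_I_alpha \<alpha> f u"
    unfolding a_def C_def
    by (linarith, simp_all add: rho_I_eq_enn2real rho_I_alpha_eq_enn2real[OF _ _ unit] density_nonneg)
  moreover have C: "emeasure lborel (cball (0::'a) (R + 1)) = ennreal C"
    unfolding C_def using emeasure_lborel_cball_finite
    by (intro emeasure_eq_ennreal_measure) (simp add: less_top)
  ultimately have "rho_I_alpha \<alpha> f u \<le> rho_I f u * a + \<epsilon> * C * a + 1 / \<delta>"
    and "rho_I f u * a \<le> rho_I_alpha \<alpha> f u + \<epsilon> * C * a"
    using slab_upper_bound slab_lower_bound eps_nonneg delta_pos
    unfolding ennreal_rho_I_alpha[OF unit alpha_pos, symmetric] ennreal_rho_I[OF unit, symmetric] C a_def[symmetric]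
    by (simp_all add: ennreal_mult[symmetric] ennreal_plus[symmetric] ennreal_le_iff del: ennreal_plus)
  moreover have "0 \<le> 1 / \<delta>"
    using delta_pos by simp
  ultimately show ?thesis
    unfolding abs_le_iff a_def[symmetric] C_def[symmetric] by (simp only: mult.commute[of a]) linarith
qed

text \<open>The truncated kernel has mass \<open>2 * arsinh (\<delta> / \<alpha>)\<close>, which falls short of the
  normalization \<open>2 * arsinh (1 / \<alpha>)\<close> by at most \<open>- 2 * ln \<delta>\<close>, uniformly in \<open>\<alpha>\<close>.\<close>
lemma slab_estimate_full_kernel:
  "\<bar>rho_I_alpha \<alpha> f u - 2 * arsinh (1 / \<alpha>) * rho_I f u\<bar>
    \<le> 2 * arsinh (1 / \<alpha>) * (\<epsilon> * measure lborel (cball (0::'a) (R + 1)))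
      + 1 / \<delta> - 2 * ln \<delta> * M * measure lborel (cball (0::'a) (R + 1))"
proof -
  define s where "s = arsinh (1 / \<alpha>)"
  define a where "a = arsinh (\<delta> / \<alpha>)"
  define C where "C = measure lborel (cball (0::'a) (R + 1))"
  define r where "r = rho_I f u"
  have "\<delta> / \<alpha> \<le> 1 / \<alpha>"
    using alpha_pos delta_le_1 by (simp add: divide_right_mono)
  then have "a \<le> s" "s + ln \<delta> \<le> a"
    using alpha_pos delta_pos delta_le_1 arsinh_mult_ge[of \<delta> "1 / \<alpha>"]
    unfolding s_def a_def by (auto simp: not_less[symmetric])
  have "0 \<le> C" "0 \<le> r" "r \<le> M * C"
    using rho_I_le[OF unit] by (simp_all add: C_def r_def rho_I_eq_enn2real density_nonneg)
  have "\<bar>rho_I_alpha \<alpha> f u - 2 * a * r\<bar> \<le> 1 / \<delta> + \<epsilon> * C * (2 * a)"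
    using slab_estimate unfolding a_def C_def r_def by simp
  moreover have "\<epsilon> * C * a \<le> \<epsilon> * C * s"
    using \<open>a \<le> s\<close> \<open>0 \<le> C\<close> eps_nonneg by (intro mult_left_mono) auto
  moreover have "0 \<le> (s - a) * r"
    using \<open>a \<le> s\<close> \<open>0 \<le> r\<close> by simp
  moreover have "(s - a) * r \<le> (- ln \<delta>) * (M * C)"
    using \<open>s + ln \<delta> \<le> a\<close> \<open>0 \<le> r\<close> \<open>r \<le> M * C\<close> delta_pos delta_le_1 by (intro mult_mono) auto
  moreover have "rho_I_alpha \<alpha> f u - 2 * s * r = (rho_I_alpha \<alpha> f u - 2 * a * r) - 2 * ((s - a) * r)"
    by (simp add: algebra_simps)
  ultimately show ?thesis
    unfolding abs_le_iff s_def[symmetric] C_def[symmetric] r_def[symmetric]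
    by (simp only: mult_ac) linarith
qed

lemma normalized_slab_estimate:
  "\<bar>rho_I_alpha \<alpha> f u / (2 * arsinh (1 / \<alpha>)) - rho_I f u\<bar>
    \<le> \<epsilon> * measure lborel (cball (0::'a) (R + 1))
      + (1 / (2 * \<delta>) - ln \<delta> * M * measure lborel (cball (0::'a) (R + 1))) / arsinh (1 / \<alpha>)"
proof -
  define s where "s = arsinh (1 / \<alpha>)"
  define C where "C = measure lborel (cball (0::'a) (R + 1))"
  have "0 < s"
    using alpha_pos by (simp add: s_def)
  then have "rho_I_alpha \<alpha> f u / (2 * s) - rho_I f u = (rho_I_alpha \<alpha> f u - 2 * s * rho_I f u) / (2 * s)"
    by (simp add: field_simps)
  then have "\<bar>rho_I_alpha \<alpha> f u / (2 * s) - rho_I f u\<bar> = \<bar>rho_I_alpha \<alpha> f u - 2 * s * rho_I f u\<bar> / (2 * s)"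
    using \<open>0 < s\<close> by (simp add: abs_divide)
  also have "\<dots> \<le> (2 * s * (\<epsilon> * C) + 1 / \<delta> - 2 * ln \<delta> * M * C) / (2 * s)"
    using slab_estimate_full_kernel[folded s_def C_def] by (rule divide_right_mono) (use \<open>0 < s\<close> in simp)
  also have "\<dots> = \<epsilon> * C + (1 / (2 * \<delta>) - ln \<delta> * M * C) / s"
    using \<open>0 < s\<close> by (simp add: field_simps)
  finally show ?thesis
    unfolding s_def C_def .
qed

end

context compactly_supported_density
begin

lemma uniform_limit_rho_I_alpha:
  "uniform_limit (sphere 0 1) (\<lambda>\<alpha> u. rho_I_alpha \<alpha> f u / (2 * arsinh (1 / \<alpha>))) (rho_I f) (at_right 0)"
proof (rule uniform_limitI_vanishing_error[OF filterlim_arsinh_inverse])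
  fix e :: real
  assume "0 < e"
  define C where "C = measure lborel (cball (0::'a) (R + 1))"
  define \<epsilon> where "\<epsilon> = e / (C + 1)"
  have "0 \<le> C"
    by (simp add: C_def)
  then have "0 < \<epsilon>" "\<epsilon> * C \<le> e"
    using \<open>0 < e\<close> by (simp_all add: \<epsilon>_def field_simps)
  have "uniformly_continuous_on (cball 0 (R + 1)) f"
    using continuous_density by (intro compact_uniformly_continuous) (auto intro: continuous_on_subset)
  then obtain d where "0 < d"
    and d: "\<And>x y. x \<in> cball 0 (R + 1) \<Longrightarrow> y \<in> cball 0 (R + 1) \<Longrightarrow> dist y x < d \<Longrightarrow> dist (f y) (f x) < \<epsilon>"
    using \<open>0 < \<epsilon>\<close> unfolding uniformly_continuous_on_def by metis
  define \<delta> where "\<delta> = min (d / 2) 1"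
  have setting: "slab_setting f M R u \<alpha> \<delta> \<epsilon>" if "u \<in> sphere 0 1" "0 < \<alpha>" for u \<alpha>
  proof
    show "\<bar>f x - f y\<bar> \<le> \<epsilon>" if "x \<in> cball 0 (R + 1)" "y \<in> cball 0 (R + 1)" "dist x y \<le> \<delta>" for x y
      using d[OF that(2,1)] that(3) \<open>0 < d\<close> by (simp add: \<delta>_def dist_commute dist_real_def)
  qed (use that \<open>0 < d\<close> \<open>0 < \<epsilon>\<close> in \<open>auto simp: \<delta>_def\<close>)
  show "\<exists>K. \<forall>\<^sub>F \<alpha> in at_right 0. \<forall>u\<in>sphere 0 1.
      \<bar>rho_I_alpha \<alpha> f u / (2 * arsinh (1 / \<alpha>)) - rho_I f u\<bar> \<le> e + K / arsinh (1 / \<alpha>)"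
  proof (intro exI eventually_mono[OF eventually_at_right_less] ballI)
    fix \<alpha> :: real and u :: 'a
    assume "0 < \<alpha>" "u \<in> sphere 0 1"
    then show "\<bar>rho_I_alpha \<alpha> f u / (2 * arsinh (1 / \<alpha>)) - rho_I f u\<bar>
        \<le> e + (1 / (2 * \<delta>) - ln \<delta> * M * C) / arsinh (1 / \<alpha>)"
      using slab_setting.normalized_slab_estimate[OF setting] \<open>\<epsilon> * C \<le> e\<close> unfolding C_def by fastforce
  qed
qed

lemma tendsto_star_volume_rho_I_alpha:
  "((\<lambda>\<alpha>. star_volume (\<lambda>u. rho_I_alpha \<alpha> f u / (2 * arsinh (1 / \<alpha>)))) \<longlongrightarrow> star_volume (rho_I f))
    (at_right 0)"
proof (rule tendsto_star_volume)
  show lim: "uniform_limit (sphere 0 1) (\<lambda>\<alpha> u. rho_I_alpha \<alpha> f u / (2 * arsinh (1 / \<alpha>))) (rho_I f) (at_right 0)"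
    by (rule uniform_limit_rho_I_alpha)
  show cont: "\<forall>\<^sub>F \<alpha> in at_right 0. continuous_on (sphere 0 1) (\<lambda>u. rho_I_alpha \<alpha> f u / (2 * arsinh (1 / \<alpha>)))"
    using eventually_at_right_less by eventually_elim (intro continuous_intros continuous_on_rho_I_alpha, auto)
  show "continuous_on (sphere 0 1) (rho_I f)"
    using cont lim by (rule uniform_limit_theorem) simp
qed

end

lemma compactly_supported_density_of_P_class:
  fixes f :: "'a::euclidean_space \<Rightarrow> real"
  assumes "f \<in> P_class" and cont: "continuous_on UNIV f" and supp: "compact (closure {x. f x \<noteq> 0})"
  obtains M R where "compactly_supported_density f M R"
proof -
  have f: "\<And>x. 0 \<le> f x" "integrable lebesgue f" "integral\<^sup>L lebesgue f = 1" "bounded (range f)"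
    using assms(1) by (auto simp: P_class_def)
  have [measurable]: "f \<in> borel_measurable borel"
    using cont by (rule borel_measurable_continuous_onI)
  obtain M where M: "\<And>x. f x \<le> M"
    using f(4) by (auto simp: bounded_iff abs_le_iff)
  obtain R where R: "\<And>x. x \<in> closure {x. f x \<noteq> 0} \<Longrightarrow> norm x \<le> R"
    using compact_imp_bounded[OF supp] by (auto simp: bounded_iff)
  have "R < norm x \<Longrightarrow> f x = 0" for x
    using R[of x] closure_subset[of "{x. f x \<noteq> 0}"] by force
  moreover have "(\<integral>\<^sup>+x. f x \<partial>lborel) = 1"
    using nn_integral_eq_integral[OF f(2)] f(1,3) by (simp add: nn_integral_completion)
  ultimately show ?thesis
    using that[of M R] f(1) M cont by (simp add: compactly_supported_density_def)
qed

theorem proposition4p2: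
  fixes f :: "'a::euclidean_space \<Rightarrow> real"
  assumes "f \<in> P_class"
    and "continuous_on UNIV f"
    and "compact (closure {x. f x \<noteq> 0})"
  shows "((\<lambda>\<alpha>. (2 * arsinh (1 / \<alpha>)) powr (- real DIM('a)) * star_volume (rho_I_alpha \<alpha> f))
          \<longlongrightarrow> star_volume (rho_I f)) (at_right 0)"
proof -
  obtain M R where "compactly_supported_density f M R"
    using compactly_supported_density_of_P_class[OF assms] .
  then interpret compactly_supported_density f M R .
  have "\<forall>\<^sub>F \<alpha> in at_right 0. star_volume (\<lambda>u. rho_I_alpha \<alpha> f u / (2 * arsinh (1 / \<alpha>)))
      = (2 * arsinh (1 / \<alpha>)) powr (- real DIM('a)) * star_volume (rho_I_alpha \<alpha> f)"
    using eventually_at_right_less by eventually_elim (simp add: star_volume_divide)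
  with tendsto_star_volume_rho_I_alpha show ?thesis
    by (rule Lim_transform_eventually)
qed

end
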